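(* Let $\alpha>\beta\geq 1$ be two real numbers such that $\alpha/\beta\notin\mathbb{N}$ and $[\alpha,\beta]\le \alpha/\beta$. Then there are no solutions to the equation $m\alpha=n\beta$ with $m$ and $n$ natural numbers such that $P^-(m)>\alpha$.
   Context: Height: for irrational $\rho>0$, $H(\rho)=\infty$; for $\rho=a/q$ with $a,q\in\mathbb{N}$, $\gcd(a,q)=1$, $H(\rho)=\max\{a,q\}$. Bracket: $[\alpha,\beta]=H(\alpha/\beta)/\max\{\alpha,\beta\}$. $P^-(n)$ denotes the smallest prime factor of $n\in\mathbb{N}$, with $P^-(1)=\infty$. *)

theory Defs
  imports "HOL-Analysis.Analysis" "HOL-Computational_Algebra.Primes"
begin

definition height :: "real \<Rightarrow> ereal" where
  "height \<rho> = (if \<rho> \<in> \<rat> then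
      (case quotient_of (SOME r. of_rat r = \<rho>) of (a, q) \<Rightarrow> ereal (real_of_int (max \<bar>a\<bar> q)))
    else \<infinity>)"

definition bracket :: "real \<Rightarrow> real \<Rightarrow> ereal" where
  "bracket \<alpha> \<beta> = height (\<alpha> / \<beta>) / ereal (max \<alpha> \<beta>)"

text \<open>Smallest prime factor, with value infinity at 1 (used only for positive n).\<close>
definition Pminus :: "nat \<Rightarrow> ereal" where
  "Pminus n = (if n = 1 then \<infinity> else ereal (real (Min {p. prime p \<and> p dvd n})))"

end

theory Submission
  imports Defs
begin

text \<open>Write \<open>\<alpha> / \<beta> = a / q\<close> in lowest terms. Then \<open>[\<alpha>, \<beta>] = a / \<alpha>\<close>, so the hypothesis
  \<open>[\<alpha>, \<beta>] \<le> \<alpha> / \<beta>\<close> says \<open>q \<le> \<alpha>\<close>, and \<open>q > 1\<close> because \<open>\<alpha> / \<beta>\<close> is not an integer.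
  A solution of \<open>m \<alpha> = n \<beta>\<close> has \<open>\<alpha> / \<beta> = n / m\<close>, so \<open>q\<close> divides \<open>m\<close>, and any prime factor of
  \<open>q\<close> is a prime factor of \<open>m\<close> not exceeding \<open>\<alpha>\<close>.\<close>

lemma height_of_int_div:
  assumes "q > 0" and "coprime a q"
  shows "height (of_int a / of_int q) = ereal (of_int (max \<bar>a\<bar> q))"
proof -
  have of_rat_Fract: "of_rat (Fract a q) = (of_int a / of_int q :: real)"
    using assms(1) by (simp add: of_rat_rat)
  then have "(SOME r. of_rat r = (of_int a / of_int q :: real)) = Fract a q"
    by (metis (mono_tags, lifting) of_rat_eq_iff someI_ex)
  moreover have "quotient_of (Fract a q) = (a, q)"
    using assms by (simp add: quotient_of_Fract)
  moreover have "(of_int a / of_int q :: real) \<in> \<rat>"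
    by (metis of_rat_Fract Rats_of_rat)
  ultimately show ?thesis
    unfolding height_def by simp
qed

lemma bracket_eq_numerator_div:
  assumes "0 < \<beta>" and "\<beta> \<le> \<alpha>" and "q > 0" and "coprime a q"
    and ratio: "\<alpha> / \<beta> = of_int a / of_int q"
  shows "bracket \<alpha> \<beta> = ereal (of_int a / \<alpha>)"
proof -
  have "1 \<le> (of_int a / of_int q :: real)"
    using assms(1,2) by (simp flip: ratio)
  then have "of_int q \<le> (of_int a :: real)"
    using assms(3) by (simp add: le_divide_eq_1)
  then have "max \<bar>a\<bar> q = a"
    using assms(3) by simp
  then show ?thesis
    using assms by (simp add: bracket_def height_of_int_div ratio)
qed

lemma denominator_le_of_bracket_le:
  assumes "0 < \<beta>" and "\<beta> \<le> \<alpha>" and "q > 0" and "coprime a q"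
    and ratio: "\<alpha> / \<beta> = of_int a / of_int q"
    and "bracket \<alpha> \<beta> \<le> ereal (\<alpha> / \<beta>)"
  shows "of_int q \<le> \<alpha>"
proof -
  have "of_int a / \<alpha> \<le> of_int a / of_int q"
    using assms bracket_eq_numerator_div by (metis ereal_less_eq(3))
  moreover have "0 < of_int a / (of_int q :: real)"
    using assms(1,2) by (simp flip: ratio)
  then have "a > 0"
    using \<open>q > 0\<close> by (simp add: zero_less_divide_iff)
  ultimately show ?thesis
    using assms(1-3) by (smt (verit) frac_less2 of_int_pos)
qed

lemma reduced_denominator_dvd:
  fixes a q n m :: int
  assumes "coprime a q" and "q \<noteq> 0" and "m \<noteq> 0"
    and "(of_int a / of_int q :: real) = of_int n / of_int m"
  shows "q dvd m"
proof -
  have "of_int (m * a) = (of_int (n * q) :: real)"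
    using assms(2-4) by (simp add: field_simps)
  then have "q dvd m * a"
    by (metis dvd_triv_right of_int_eq_iff)
  then show ?thesis
    using assms(1) by (simp add: coprime_commute coprime_dvd_mult_left_iff)
qed

lemma Pminus_le_divisor:
  assumes "m > 0" and "d dvd m" and "d \<noteq> 1"
  shows "Pminus m \<le> ereal (real d)"
proof -
  have "d > 0"
    using assms by (metis dvd_pos_nat)
  obtain p where p: "prime p" "p dvd d"
    using assms(3) prime_factor_nat by blast
  have "p dvd m"
    using p(2) assms(2) by (rule dvd_trans)
  then have "Min {p. prime p \<and> p dvd m} \<le> p"
    using assms(1) p(1) by (intro Min_le) auto
  also have "p \<le> d"
    using p(2) \<open>d > 0\<close> by (rule dvd_imp_le)
  finally show ?thesis
    using \<open>p dvd m\<close> p(1) by (auto simp: Pminus_def)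
qed

theorem lemma2p7:
  fixes \<alpha> \<beta> :: real
  assumes "\<alpha> > \<beta>" and "\<beta> \<ge> 1"
    and "\<not> (\<exists>k::nat. \<alpha> / \<beta> = real k)"
    and "bracket \<alpha> \<beta> \<le> ereal (\<alpha> / \<beta>)"
  shows "\<not> (\<exists>m n :: nat. m > 0 \<and> n > 0 \<and> real m * \<alpha> = real n * \<beta> \<and> Pminus m > ereal \<alpha>)"
proof
  assume "\<exists>m n :: nat. m > 0 \<and> n > 0 \<and> real m * \<alpha> = real n * \<beta> \<and> Pminus m > ereal \<alpha>"
  then obtain m n :: nat where "m > 0" and "real m * \<alpha> = real n * \<beta>" and "Pminus m > ereal \<alpha>"
    by blast
  then have ratio_nm: "\<alpha> / \<beta> = of_int (int n) / of_int (int m)"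
    using assms(2) by (simp add: field_simps)
  then obtain a q where "q > 0" and "coprime a q" and ratio: "\<alpha> / \<beta> = of_int a / of_int q"
    using Rats_cases' Rats_divide Rats_of_int by metis
  have "q dvd int m"
    using reduced_denominator_dvd[of a q "int m" "int n"] \<open>coprime a q\<close> \<open>q > 0\<close> \<open>m > 0\<close>
      ratio ratio_nm by simp
  have "q \<noteq> 1"
  proof
    assume "q = 1"
    moreover have "\<alpha> / \<beta> > 0"
      using assms(1,2) by simp
    ultimately have "\<alpha> / \<beta> = real (nat a)"
      using ratio by simp
    with assms(3) show False
      by blast
  qed
  have "of_int q \<le> \<alpha>"
    using assms(1,2,4) \<open>q > 0\<close> \<open>coprime a q\<close> ratio
    by (intro denominator_le_of_bracket_le[of \<beta> \<alpha> q a]) auto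
  have "nat q dvd m"
    using \<open>q dvd int m\<close> \<open>q > 0\<close> by (metis int_dvd_int_iff int_nat_eq less_imp_le)
  moreover have "nat q \<noteq> 1"
    using \<open>q \<noteq> 1\<close> \<open>q > 0\<close> by simp
  ultimately have "Pminus m \<le> ereal (real (nat q))"
    using Pminus_le_divisor \<open>m > 0\<close> by blast
  also have "\<dots> \<le> ereal \<alpha>"
    using \<open>of_int q \<le> \<alpha>\<close> \<open>q > 0\<close> by simp
  finally show False
    using \<open>Pminus m > ereal \<alpha>\<close> by simp
qed

end
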